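(* Let $q(n)$ denote the number of partitions of $n$ into distinct parts, with $q(0)=1$ and $q(n)=0$ for $n<0$, and define $s(n)=q(n)-2q(n-1)+q(n-2)$ for $n\ge 0$. Then for every integer $n\ge 6$, $s(n)$ equals the number of partitions of $n$ into distinct parts $p_1>p_2>\dots>p_k$ with $k\ge 3$ such that $$p_1=p_2+1=p_3+2>p_4>\dots>p_k>1,$$ i.e. strict partitions of $n$ with at least three parts, the three largest parts consecutive integers, and the smallest part at least $2$.
   Context: $s(n)$ is the second difference of the sequence $q(n)$ of numbers of strict partitions (partitions into distinct parts). *)

theory Defs
  imports Main
begin

definition strict_partitions :: "nat \<Rightarrow> nat set set" where
  "strict_partitions n = {A. finite A \<and> 0 \<notin> A \<and> \<Sum>A = n}"

definition q :: "int \<Rightarrow> int" where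
  "q n = (if n < 0 then 0 else int (card (strict_partitions (nat n))))"

definition s :: "int \<Rightarrow> int" where
  "s n = q n - 2 * q (n - 1) + q (n - 2)"

definition special_partitions :: "nat \<Rightarrow> nat set set" where
  "special_partitions n = {A \<in> strict_partitions n. card A \<ge> 3 \<and>
      Max A - 1 \<in> A \<and> Max A - 2 \<in> A \<and> (\<forall>x\<in>A. x \<ge> 2)}"

end

theory Submission
  imports Defs
begin

text \<open>Let E(n) be the strict partitions of n whose two largest parts are consecutive.
  Raising the largest part by one maps the strict partitions of n - 1 bijectively onto
  those of n outside E(n), so q(n) - q(n-1) = |E(n)|. Differencing once more, split E(n):
  deleting the part 1 matches the members containing 1 with the members of E(n-1) not
  containing 1; replacing the parts 1 and m - 1 (m the largest part) by m + 1 matches the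
  members of E(n-1) containing 1 with the members of E(n) that contain neither 1 nor their
  largest part minus 2. What is left of E(n) are exactly the special partitions, so
  s(n) = |E(n)| - |E(n-1)| counts them.\<close>

definition consecutive_top_partitions :: "nat \<Rightarrow> nat set set" where
  "consecutive_top_partitions n = {A \<in> strict_partitions n. Max A - 1 \<in> A}"

lemma mem_strict_partitions_iff:
  "A \<in> strict_partitions n \<longleftrightarrow> finite A \<and> 0 \<notin> A \<and> \<Sum>A = n"
  by (simp add: strict_partitions_def)

lemma finite_strict_partitions: "finite (strict_partitions n)"
proof (rule finite_subset)
  show "strict_partitions n \<subseteq> Pow {..n}"
  proof
    fix A assume "A \<in> strict_partitions n"
    then have "finite A" "\<Sum>A = n" by (auto simp: mem_strict_partitions_iff)
    then show "A \<in> Pow {..n}"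
      using member_le_sum[of _ A "\<lambda>x. x"] by auto
  qed
qed simp

lemma finite_consecutive_top_partitions: "finite (consecutive_top_partitions n)"
  by (rule finite_subset[OF _ finite_strict_partitions])
    (auto simp: consecutive_top_partitions_def)

lemma Max_gt_if_sum_gt:
  fixes A :: "nat set"
  assumes "finite A" and "\<forall>x\<in>A. l \<le> x" and "\<Sum>{l..k} < \<Sum>A"
  shows "k < Max A"
proof (rule ccontr)
  assume "\<not> k < Max A"
  then have "\<forall>x\<in>A. x \<le> k" using assms(1) by (meson Max_ge le_trans not_less)
  then have "A \<subseteq> {l..k}" using assms(2) by auto
  then have "\<Sum>A \<le> \<Sum>{l..k}" by (intro sum_mono2) auto
  with assms(3) show False by simp
qed

lemma Max_gt_if_strict_partition_gt:
  assumes "A \<in> strict_partitions n" and "\<Sum>{1..k} < n"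
  shows "k < Max A"
  using assms by (intro Max_gt_if_sum_gt[where l = 1])
    (auto simp: mem_strict_partitions_iff Suc_le_eq intro!: gr0I)

definition raise_Max :: "nat set \<Rightarrow> nat set" where
  "raise_Max A = insert (Suc (Max A)) (A - {Max A})"

definition lower_Max :: "nat set \<Rightarrow> nat set" where
  "lower_Max B = insert (Max B - 1) (B - {Max B})"

lemma Max_raise_Max: "finite A \<Longrightarrow> Max (raise_Max A) = Suc (Max A)"
  unfolding raise_Max_def by (rule Max_eqI) (auto simp: le_SucI)

lemma Max_lower_Max:
  assumes "finite B"
  shows "Max (lower_Max B) = Max B - 1"
proof -
  have "y \<le> Max B - 1" if "y \<in> B - {Max B}" for y
    using that Max_ge[OF assms, of y] by auto
  then show ?thesis unfolding lower_Max_def using assms by (intro Max_eqI) auto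
qed

lemma sum_raise_Max:
  fixes A :: "nat set"
  assumes "finite A" and "A \<noteq> {}"
  shows "\<Sum>(raise_Max A) = Suc (\<Sum>A)"
proof -
  have "Max A \<in> A" using assms by simp
  moreover have "Suc (Max A) \<notin> A" using Max_ge[OF assms(1)] by fastforce
  ultimately show ?thesis unfolding raise_Max_def using assms(1) by (simp add: sum.remove)
qed

lemma sum_lower_Max:
  fixes B :: "nat set"
  assumes "finite B" and "B \<noteq> {}" and "0 < Max B" and "Max B - 1 \<notin> B"
  shows "Suc (\<Sum>(lower_Max B)) = \<Sum>B"
proof -
  have "Max B \<in> B" using assms by simp
  have "Suc (\<Sum>(lower_Max B)) = Max B + \<Sum>(B - {Max B})"
    unfolding lower_Max_def using assms by simp
  also have "\<dots> = \<Sum>B" using sum.remove[OF assms(1) \<open>Max B \<in> B\<close>, of "\<lambda>x. x"] by simp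
  finally show ?thesis .
qed

lemma lower_Max_raise_Max:
  assumes "finite A" and "A \<noteq> {}"
  shows "lower_Max (raise_Max A) = A"
proof -
  have "Max A \<in> A" using assms by simp
  moreover have "Suc (Max A) \<notin> A" using Max_ge[OF assms(1)] by fastforce
  ultimately show ?thesis
    unfolding lower_Max_def Max_raise_Max[OF assms(1)] by (auto simp: raise_Max_def)
qed

lemma raise_Max_lower_Max:
  assumes "finite B" and "B \<noteq> {}" and "0 < Max B" and "Max B - 1 \<notin> B"
  shows "raise_Max (lower_Max B) = B"
proof -
  have "Max B \<in> B" using assms by simp
  have "raise_Max (lower_Max B) = insert (Max B) (insert (Max B - 1) (B - {Max B}) - {Max B - 1})"
    unfolding raise_Max_def Max_lower_Max[OF assms(1)] using assms(3) by (simp add: lower_Max_def)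
  also have "\<dots> = B" using \<open>Max B \<in> B\<close> assms(4) by auto
  finally show ?thesis .
qed

lemma bij_betw_raise_Max:
  assumes "1 \<le> n"
  shows "bij_betw raise_Max (strict_partitions n)
           (strict_partitions (Suc n) - consecutive_top_partitions (Suc n))"
proof -
  have raise: "raise_Max A \<in> strict_partitions (Suc n) - consecutive_top_partitions (Suc n)
      \<and> lower_Max (raise_Max A) = A"
    if "A \<in> strict_partitions n" for A
  proof -
    from that assms have A: "finite A" "0 \<notin> A" "\<Sum>A = n" "A \<noteq> {}"
      by (auto simp: mem_strict_partitions_iff)
    moreover have "finite (raise_Max A)" "0 \<notin> raise_Max A" "Max A \<notin> raise_Max A"
      using A by (auto simp: raise_Max_def)
    ultimately show ?thesis
      by (simp add: mem_strict_partitions_iff consecutive_top_partitions_def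
          sum_raise_Max Max_raise_Max lower_Max_raise_Max)
  qed
  have lower: "lower_Max B \<in> strict_partitions n \<and> raise_Max (lower_Max B) = B"
    if B: "B \<in> strict_partitions (Suc n) - consecutive_top_partitions (Suc n)" for B
  proof -
    from B have fin: "finite B" and "0 \<notin> B" "\<Sum>B = Suc n" and gap: "Max B - 1 \<notin> B"
      by (auto simp: mem_strict_partitions_iff consecutive_top_partitions_def)
    have "1 < Max B" using B assms by (intro Max_gt_if_strict_partition_gt[of B "Suc n"]) auto
    have "B \<noteq> {}" using \<open>\<Sum>B = Suc n\<close> by auto
    have "\<Sum>(lower_Max B) = n"
      using sum_lower_Max[OF fin \<open>B \<noteq> {}\<close> _ gap] \<open>1 < Max B\<close> \<open>\<Sum>B = Suc n\<close> by simp
    moreover have "finite (lower_Max B)" "0 \<notin> lower_Max B"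
      using fin \<open>0 \<notin> B\<close> \<open>1 < Max B\<close> by (auto simp: lower_Max_def)
    ultimately show ?thesis
      using fin \<open>B \<noteq> {}\<close> \<open>1 < Max B\<close> gap
      by (simp add: mem_strict_partitions_iff raise_Max_lower_Max)
  qed
  show ?thesis by (rule bij_betw_byWitness[where f' = lower_Max]) (use raise lower in auto)
qed

lemma card_strict_partitions_Suc:
  assumes "1 \<le> n"
  shows "card (strict_partitions (Suc n))
           = card (strict_partitions n) + card (consecutive_top_partitions (Suc n))"
proof -
  have "consecutive_top_partitions (Suc n) \<subseteq> strict_partitions (Suc n)"
    by (auto simp: consecutive_top_partitions_def)
  then have "card (strict_partitions (Suc n))
      = card (strict_partitions (Suc n) - consecutive_top_partitions (Suc n))
        + card (consecutive_top_partitions (Suc n))"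
    using finite_strict_partitions
    by (metis card_Diff_subset card_mono finite_subset le_add_diff_inverse2)
  with bij_betw_same_card[OF bij_betw_raise_Max[OF assms]] show ?thesis by simp
qed

lemma special_partitions_eq:
  "special_partitions n = {A \<in> consecutive_top_partitions n. 1 \<notin> A \<and> Max A - 2 \<in> A}"
proof (intro set_eqI iffI)
  fix A assume "A \<in> special_partitions n"
  then show "A \<in> {A \<in> consecutive_top_partitions n. 1 \<notin> A \<and> Max A - 2 \<in> A}"
    unfolding special_partitions_def consecutive_top_partitions_def by force
next
  fix A assume A: "A \<in> {A \<in> consecutive_top_partitions n. 1 \<notin> A \<and> Max A - 2 \<in> A}"
  then have fin: "finite A" and "0 \<notin> A" "1 \<notin> A" and top: "Max A - 1 \<in> A" "Max A - 2 \<in> A"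
    by (auto simp: consecutive_top_partitions_def mem_strict_partitions_iff)
  then have ge2: "\<forall>x\<in>A. 2 \<le> x" by (metis One_nat_def less_2_cases not_less)
  have "Max A \<in> A" using fin top by (intro Max_in) auto
  have "4 \<le> Max A" using ge2 top(2) by fastforce
  have "{Max A, Max A - 1, Max A - 2} \<subseteq> A" using \<open>Max A \<in> A\<close> top by auto
  moreover have "card {Max A, Max A - 1, Max A - 2} = 3"
    using \<open>4 \<le> Max A\<close> by (auto simp: card_insert_if)
  ultimately have "3 \<le> card A" using fin by (metis card_mono)
  with A ge2 show "A \<in> special_partitions n"
    by (auto simp: special_partitions_def consecutive_top_partitions_def)
qed

lemma bij_betw_insert_one:
  assumes "3 \<le> n"
  shows "bij_betw (insert 1) {A \<in> consecutive_top_partitions n. 1 \<notin> A}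
           {B \<in> consecutive_top_partitions (Suc n). 1 \<in> B}"
proof -
  have insert: "insert 1 A \<in> {B \<in> consecutive_top_partitions (Suc n). 1 \<in> B}
      \<and> insert 1 A - {1} = A"
    if "A \<in> {A \<in> consecutive_top_partitions n. 1 \<notin> A}" for A
  proof -
    from that have fin: "finite A" and "0 \<notin> A" "1 \<notin> A" "\<Sum>A = n" and top: "Max A - 1 \<in> A"
      by (auto simp: consecutive_top_partitions_def mem_strict_partitions_iff)
    then have "A \<noteq> {}" using assms by auto
    have "1 \<le> Max A" using fin \<open>A \<noteq> {}\<close> \<open>0 \<notin> A\<close> by (metis Max_in less_one not_less)
    then have "Max (insert 1 A) = Max A" using fin \<open>A \<noteq> {}\<close> by (simp add: max_def)
    with fin \<open>0 \<notin> A\<close> \<open>1 \<notin> A\<close> \<open>\<Sum>A = n\<close> top show ?thesis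
      by (simp add: consecutive_top_partitions_def mem_strict_partitions_iff)
  qed
  have delete: "B - {1} \<in> {A \<in> consecutive_top_partitions n. 1 \<notin> A} \<and> insert 1 (B - {1}) = B"
    if B: "B \<in> {B \<in> consecutive_top_partitions (Suc n). 1 \<in> B}" for B
  proof -
    from B have fin: "finite B" and "0 \<notin> B" "1 \<in> B" "\<Sum>B = Suc n" and top: "Max B - 1 \<in> B"
      by (auto simp: consecutive_top_partitions_def mem_strict_partitions_iff)
    have "2 < Max B"
      using B assms by (intro Max_gt_if_strict_partition_gt[of B "Suc n"])
        (auto simp: consecutive_top_partitions_def numeral_2_eq_2)
    then have "Max (B - {1}) = Max B"
      using fin \<open>1 \<in> B\<close> by (intro Max_eqI) (auto intro!: Max_in)
    moreover have "\<Sum>(B - {1}) = n"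
      using sum.remove[OF fin \<open>1 \<in> B\<close>, of "\<lambda>x. x"] \<open>\<Sum>B = Suc n\<close> by simp
    ultimately show ?thesis using fin \<open>0 \<notin> B\<close> \<open>1 \<in> B\<close> \<open>2 < Max B\<close> top
      by (auto simp: consecutive_top_partitions_def mem_strict_partitions_iff)
  qed
  show ?thesis
    by (rule bij_betw_byWitness[where f' = "\<lambda>B. B - {1}"]) (use insert delete in auto)
qed

definition absorb_one :: "nat set \<Rightarrow> nat set" where
  "absorb_one A = insert (Suc (Max A)) (A - {1, Max A - 1})"

definition release_one :: "nat set \<Rightarrow> nat set" where
  "release_one B = insert 1 (insert (Max B - 2) (B - {Max B}))"

lemma Max_absorb_one: "finite A \<Longrightarrow> Max (absorb_one A) = Suc (Max A)"
  unfolding absorb_one_def by (rule Max_eqI) (auto simp: le_SucI)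

lemma Max_release_one:
  assumes "finite B" and "Max B - 1 \<in> B" and "1 < Max B"
  shows "Max (release_one B) = Max B - 1"
proof -
  have "y \<le> Max B - 1" if "y \<in> B - {Max B}" for y
    using that Max_ge[OF assms(1), of y] by auto
  then show ?thesis unfolding release_one_def using assms by (intro Max_eqI) auto
qed

lemma sum_absorb_one:
  fixes A :: "nat set"
  assumes "finite A" and "1 \<in> A" and "Max A - 1 \<in> A" and "2 < Max A"
  shows "\<Sum>(absorb_one A) = Suc (\<Sum>A)"
proof -
  let ?R = "A - {1} - {Max A - 1}"
  have "Suc (Max A) \<notin> A" using Max_ge[OF assms(1)] by fastforce
  then have "\<Sum>(absorb_one A) = Suc (Max A) + \<Sum>?R"
    unfolding absorb_one_def using assms(1) by (simp add: Diff_insert2[symmetric])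
  moreover have "\<Sum>A = 1 + \<Sum>(A - {1})" using sum.remove[OF assms(1,2)] .
  moreover have "\<Sum>(A - {1}) = (Max A - 1) + \<Sum>?R"
    using assms by (intro sum.remove) auto
  ultimately show ?thesis using assms(4) by simp
qed

lemma sum_release_one:
  fixes B :: "nat set"
  assumes "finite B" and "B \<noteq> {}" and "1 \<notin> B" and "Max B - 2 \<notin> B" and "3 < Max B"
  shows "Suc (\<Sum>(release_one B)) = \<Sum>B"
proof -
  have "Max B \<in> B" using assms by (intro Max_in) auto
  have "Suc (\<Sum>(release_one B)) = Max B + \<Sum>(B - {Max B})"
    unfolding release_one_def using assms by simp
  also have "\<dots> = \<Sum>B" using sum.remove[OF assms(1) \<open>Max B \<in> B\<close>, of "\<lambda>x. x"] by simp
  finally show ?thesis .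
qed

lemma release_one_absorb_one:
  assumes "finite A" and "1 \<in> A" and "Max A - 1 \<in> A" and "2 < Max A"
  shows "release_one (absorb_one A) = A"
proof -
  have "Suc (Max A) \<notin> A" using Max_ge[OF assms(1)] by fastforce
  then have "absorb_one A - {Suc (Max A)} = A - {1, Max A - 1}"
    unfolding absorb_one_def by auto
  then have "release_one (absorb_one A) = insert 1 (insert (Max A - 1) (A - {1, Max A - 1}))"
    unfolding release_one_def Max_absorb_one[OF assms(1)] by simp
  also have "\<dots> = A" using assms(2,3) by blast
  finally show ?thesis .
qed

lemma absorb_one_release_one:
  assumes "finite B" and "1 \<notin> B" and "Max B - 1 \<in> B" and "Max B - 2 \<notin> B" and "3 < Max B"
  shows "absorb_one (release_one B) = B"
proof -
  have "Max B \<in> B" using assms by (intro Max_in) auto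
  have "1 < Max B" using assms(5) by simp
  have "absorb_one (release_one B) = insert (Max B) (release_one B - {1, Max B - 2})"
    unfolding absorb_one_def Max_release_one[OF assms(1,3) \<open>1 < Max B\<close>] using assms(5)
    by (simp add: numeral_2_eq_2)
  also have "release_one B - {1, Max B - 2} = B - {Max B}"
    unfolding release_one_def using assms(2,4) by blast
  also have "insert (Max B) (B - {Max B}) = B" using \<open>Max B \<in> B\<close> by blast
  finally show ?thesis .
qed

lemma bij_betw_absorb_one:
  assumes "5 \<le> n"
  shows "bij_betw absorb_one {A \<in> consecutive_top_partitions n. 1 \<in> A}
           {B \<in> consecutive_top_partitions (Suc n). 1 \<notin> B \<and> Max B - 2 \<notin> B}"
proof -
  have absorb: "absorb_one A
        \<in> {B \<in> consecutive_top_partitions (Suc n). 1 \<notin> B \<and> Max B - 2 \<notin> B}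
      \<and> release_one (absorb_one A) = A"
    if A: "A \<in> {A \<in> consecutive_top_partitions n. 1 \<in> A}" for A
  proof -
    from A have fin: "finite A" and "0 \<notin> A" "1 \<in> A" "\<Sum>A = n" and top: "Max A - 1 \<in> A"
      by (auto simp: consecutive_top_partitions_def mem_strict_partitions_iff)
    have "2 < Max A"
      using A assms by (intro Max_gt_if_strict_partition_gt[of A n])
        (auto simp: consecutive_top_partitions_def numeral_2_eq_2)
    have "Max A \<in> A" using fin \<open>1 \<in> A\<close> by (intro Max_in) auto
    have "finite (absorb_one A)" "0 \<notin> absorb_one A" "1 \<notin> absorb_one A"
        "Max A \<in> absorb_one A" "Max A - 1 \<notin> absorb_one A"
      using fin \<open>0 \<notin> A\<close> \<open>Max A \<in> A\<close> \<open>2 < Max A\<close> by (auto simp: absorb_one_def)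
    with fin \<open>1 \<in> A\<close> top \<open>2 < Max A\<close> \<open>\<Sum>A = n\<close> show ?thesis
      by (simp add: consecutive_top_partitions_def mem_strict_partitions_iff numeral_2_eq_2
          Max_absorb_one sum_absorb_one release_one_absorb_one)
  qed
  have release: "release_one B \<in> {A \<in> consecutive_top_partitions n. 1 \<in> A}
      \<and> absorb_one (release_one B) = B"
    if B: "B \<in> {B \<in> consecutive_top_partitions (Suc n). 1 \<notin> B \<and> Max B - 2 \<notin> B}" for B
  proof -
    from B have fin: "finite B" and "0 \<notin> B" "1 \<notin> B" "\<Sum>B = Suc n"
      and top: "Max B - 1 \<in> B" and gap: "Max B - 2 \<notin> B"
      by (auto simp: consecutive_top_partitions_def mem_strict_partitions_iff)
    have "\<forall>x\<in>B. 2 \<le> x" using \<open>0 \<notin> B\<close> \<open>1 \<notin> B\<close> by (metis One_nat_def less_2_cases not_less)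
    then have "3 < Max B"
      using fin \<open>\<Sum>B = Suc n\<close> assms
      by (intro Max_gt_if_sum_gt[where l = 2]) (auto simp: numeral_3_eq_3)
    have "B \<noteq> {}" using top by auto
    have "finite (release_one B)" "0 \<notin> release_one B" "1 \<in> release_one B"
      using fin \<open>0 \<notin> B\<close> \<open>3 < Max B\<close> by (auto simp: release_one_def)
    moreover have "Max B - 2 \<in> release_one B" by (simp add: release_one_def)
    moreover have "\<Sum>(release_one B) = n"
      using sum_release_one[OF fin \<open>B \<noteq> {}\<close> \<open>1 \<notin> B\<close> gap \<open>3 < Max B\<close>] \<open>\<Sum>B = Suc n\<close> by simp
    ultimately show ?thesis
      using fin top gap \<open>1 \<notin> B\<close> \<open>3 < Max B\<close>
      by (simp add: consecutive_top_partitions_def mem_strict_partitions_iff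
          Max_release_one absorb_one_release_one numeral_2_eq_2)
  qed
  show ?thesis
    by (rule bij_betw_byWitness[where f' = release_one]) (use absorb release in auto)
qed

lemma card_consecutive_top_partitions_Suc:
  assumes "5 \<le> n"
  shows "card (consecutive_top_partitions (Suc n))
           = card (consecutive_top_partitions n) + card (special_partitions (Suc n))"
proof -
  let ?C = consecutive_top_partitions
  let ?P = "{A \<in> ?C n. 1 \<notin> A}" and ?Q = "{A \<in> ?C n. 1 \<in> A}"
  let ?S = "special_partitions (Suc n)" and ?P' = "{B \<in> ?C (Suc n). 1 \<in> B}"
    and ?Q' = "{B \<in> ?C (Suc n). 1 \<notin> B \<and> Max B - 2 \<notin> B}"
  have fin: "finite ?P" "finite ?Q" "finite ?S" "finite ?P'" "finite ?Q'"
    using finite_consecutive_top_partitions[of n] finite_consecutive_top_partitions[of "Suc n"]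
    unfolding special_partitions_eq by auto
  have "card (?C n) = card (?P \<union> ?Q)" by (rule arg_cong[where f = card]) blast
  also have "\<dots> = card ?P + card ?Q" using fin by (intro card_Un_disjoint) auto
  finally have split_n: "card (?C n) = card ?P + card ?Q" .
  have "card (?C (Suc n)) = card (?S \<union> (?P' \<union> ?Q'))"
    unfolding special_partitions_eq by (rule arg_cong[where f = card]) blast
  also have "\<dots> = card ?S + card (?P' \<union> ?Q')"
    using fin by (intro card_Un_disjoint) (auto simp: special_partitions_eq)
  also have "card (?P' \<union> ?Q') = card ?P' + card ?Q'"
    using fin by (intro card_Un_disjoint) auto
  finally have split_Suc_n: "card (?C (Suc n)) = card ?S + (card ?P' + card ?Q')" .
  have "card ?P = card ?P'" "card ?Q = card ?Q'"
    using assms bij_betw_same_card[OF bij_betw_insert_one]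
      bij_betw_same_card[OF bij_betw_absorb_one]
    by simp_all
  with split_n split_Suc_n show ?thesis by simp
qed

theorem proposition1p3:
  fixes n :: nat
  assumes "n \<ge> 6"
  shows "s (int n) = int (card (special_partitions n))"
proof -
  define k where "k = n - 2"
  have n: "n = Suc (Suc k)" and "4 \<le> k" using assms by (simp_all add: k_def)
  have q: "q (int m) = int (card (strict_partitions m))" for m by (simp add: q_def)
  have "int n - 1 = int (Suc k)" "int n - 2 = int k" using n by simp_all
  then have "s (int n) = q (int (Suc (Suc k))) - 2 * q (int (Suc k)) + q (int k)"
    unfolding s_def by (simp add: n)
  then show ?thesis
    unfolding q n using \<open>4 \<le> k\<close>
      card_strict_partitions_Suc[of "Suc k"] card_strict_partitions_Suc[of k]
      card_consecutive_top_partitions_Suc[of "Suc k"]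
    by simp
qed

end
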